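(* Let $D,D'$ be torus invariant Weil divisors on the cyclic quotient singularity $X$, and let $K=-[\rho^0]-[\rho^1]$ be the canonical divisor (so $\mathrm{vert}(K)=[1,\tfrac{q+1}{n}]$). Define \[ \mathrm{below}(D)=\mathrm{int}(P_D)\setminus\bigcup_{u\in G(D)}(u+\mathrm{int}\,\sigma^\vee),\quad \mathrm{abelow}(D)=P_D\setminus\bigcup_{u\in G(D)}(u+\sigma^\vee), \] \[ \mathrm{link}(D)=\mathrm{below}(D)\cap\big[\overline{\mathrm{below}(D)}+\mathrm{vert}(K)\big]. \] Then: (1) $\mathrm{link}(D)=\overline{\mathrm{abelow}(D)}\cap\big[\mathrm{abelow}(D)+\mathrm{vert}(K)\big]$; (2) $\big[\mathrm{below}(D)+\mathrm{vert}(D')\big]\cap M=\big[\mathrm{link}(D)+\mathrm{vert}(D')\big]\cap M$; (3) $\big[\mathrm{abelow}(D)+\mathrm{vert}(D')\big]\cap M=\big[\mathrm{link}(D)+\mathrm{vert}(D')-\mathrm{vert}(K)\big]\cap M$.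
   Context: Fix coprime integers $0<q<n$. Let $M=\mathbb Z^2$, $M_{\mathbb Q}=\mathbb Q^2$ (topology induced from $\mathbb R^2$; $\mathrm{int}$ is interior and $\overline{\,\cdot\,}$ is closure), with the standard scalar product $\langle\cdot,\cdot\rangle$. Put $\rho^0=(1,0)$, $\rho^1=(-q,n)$, $\sigma^\vee=\{u\in M_{\mathbb Q}:\langle u,\rho^0\rangle\ge 0,\ \langle u,\rho^1\rangle\ge 0\}$, $R=\mathbb C[\sigma^\vee\cap M]$, $X=\mathrm{Spec}\,R$. A torus invariant Weil divisor is $D=a_0[\rho^0]+a_1[\rho^1]$, $a_i\in\mathbb Z$, with section polyhedron $P_D=\{u\in M_{\mathbb Q}:\langle u,\rho^i\rangle\ge -a_i,\ i=0,1\}=\mathrm{vert}(D)+\sigma^\vee$ for a unique $\mathrm{vert}(D)\in\mathbb Q^2$. $G(D)$ is the set of lattice points $u\in M$ lying on compact edges of $\mathrm{conv}(P_D\cap M)$. Sums of a set and a vector are Minkowski translates. *)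

theory Defs
  imports "HOL-Analysis.Analysis"
begin

text \<open>Points of M_Q = Q^2 are represented as rational points of real \<times> real;
  the topology on M_Q is the subspace topology induced from R^2.\<close>

definition Q2 :: "(real \<times> real) set" where
  "Q2 = {(x, y). x \<in> \<rat> \<and> y \<in> \<rat>}"

definition latM :: "(real \<times> real) set" where
  "latM = {(x, y). x \<in> \<int> \<and> y \<in> \<int>}"

definition ip :: "real \<times> real \<Rightarrow> real \<times> real \<Rightarrow> real" where
  "ip u v = fst u * fst v + snd u * snd v"

definition rho0 :: "real \<times> real" where
  "rho0 = (1, 0)"

definition rho1 :: "nat \<Rightarrow> nat \<Rightarrow> real \<times> real" where
  "rho1 q n = (- real q, real n)"

definition sigmaDual :: "nat \<Rightarrow> nat \<Rightarrow> (real \<times> real) set" where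
  "sigmaDual q n = {u \<in> Q2. ip u rho0 \<ge> 0 \<and> ip u (rho1 q n) \<ge> 0}"

text \<open>Section polyhedron of D = a0[rho0] + a1[rho1].\<close>
definition PD :: "nat \<Rightarrow> nat \<Rightarrow> int \<Rightarrow> int \<Rightarrow> (real \<times> real) set" where
  "PD q n a0 a1 = {u \<in> Q2. ip u rho0 \<ge> - of_int a0 \<and> ip u (rho1 q n) \<ge> - of_int a1}"

definition transl :: "real \<times> real \<Rightarrow> (real \<times> real) set \<Rightarrow> (real \<times> real) set" where
  "transl v S = (\<lambda>x. v + x) ` S"

definition vert :: "nat \<Rightarrow> nat \<Rightarrow> int \<Rightarrow> int \<Rightarrow> real \<times> real" where
  "vert q n a0 a1 = (THE v. v \<in> Q2 \<and> PD q n a0 a1 = transl v (sigmaDual q n))"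

definition intQ :: "(real \<times> real) set \<Rightarrow> (real \<times> real) set" where
  "intQ S = (top_of_set Q2) interior_of S"

definition clQ :: "(real \<times> real) set \<Rightarrow> (real \<times> real) set" where
  "clQ S = (top_of_set Q2) closure_of S"

definition GD :: "nat \<Rightarrow> nat \<Rightarrow> int \<Rightarrow> int \<Rightarrow> (real \<times> real) set" where
  "GD q n a0 a1 = {u \<in> latM. \<exists>F. F face_of convex hull (PD q n a0 a1 \<inter> latM)
       \<and> compact F \<and> aff_dim F = 1 \<and> u \<in> F}"

definition below :: "nat \<Rightarrow> nat \<Rightarrow> int \<Rightarrow> int \<Rightarrow> (real \<times> real) set" where
  "below q n a0 a1 = intQ (PD q n a0 a1)
     - (\<Union>u\<in>GD q n a0 a1. transl u (intQ (sigmaDual q n)))"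

definition abelow :: "nat \<Rightarrow> nat \<Rightarrow> int \<Rightarrow> int \<Rightarrow> (real \<times> real) set" where
  "abelow q n a0 a1 = PD q n a0 a1
     - (\<Union>u\<in>GD q n a0 a1. transl u (sigmaDual q n))"

definition vertK :: "nat \<Rightarrow> nat \<Rightarrow> real \<times> real" where
  "vertK q n = vert q n (-1) (-1)"

definition link :: "nat \<Rightarrow> nat \<Rightarrow> int \<Rightarrow> int \<Rightarrow> (real \<times> real) set" where
  "link q n a0 a1 = below q n a0 a1 \<inter> transl (vertK q n) (clQ (below q n a0 a1))"

end

theory Submission
  imports Defs
begin

text \<open>In the coordinates given by pairing with the two rays, \<open>\<sigma>\<^sup>\<vee>\<close> is the closed positive
  quadrant, \<open>P\<^sub>D\<close> a translate of it, and \<open>vert(K)\<close> the point with both coordinates 1. Since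
  \<open>G(D)\<close> consists of lattice points, whose coordinates are integers, a small rational shift along
  \<open>vert(K)\<close> moves \<open>abelow(D)\<close> into \<open>below(D)\<close> and a shift along \<open>-vert(K)\<close> moves \<open>below(D)\<close>
  into \<open>abelow(D)\<close>; with the closedness of \<open>P\<^sub>D\<close> and the openness of the removed interior
  quadrants this gives (1). For a point with integral coordinates a strict inequality against an
  integer becomes a weak one after subtracting 1, so such a point lies in \<open>below(D)\<close> exactly when its
  shift by \<open>-vert(K)\<close> lies in \<open>abelow(D)\<close>; this gives (2) and (3), as \<open>M - vert(D')\<close> has
  integral coordinates.\<close>

lemma Q2_iff: "u \<in> Q2 \<longleftrightarrow> fst u \<in> \<rat> \<and> snd u \<in> \<rat>"
  by (cases u) (simp add: Q2_def)

lemma Q2_add: "x \<in> Q2 \<Longrightarrow> y \<in> Q2 \<Longrightarrow> x + y \<in> Q2"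
  and Q2_diff: "x \<in> Q2 \<Longrightarrow> y \<in> Q2 \<Longrightarrow> x - y \<in> Q2"
  and Q2_scaleR: "c \<in> \<rat> \<Longrightarrow> x \<in> Q2 \<Longrightarrow> c *\<^sub>R x \<in> Q2"
  by (simp_all add: Q2_iff)

lemma Q2_diff_iff: "y \<in> Q2 \<Longrightarrow> x - y \<in> Q2 \<longleftrightarrow> x \<in> Q2"
  by (metis Q2_add Q2_diff diff_add_cancel)

lemma latM_subset_Q2: "latM \<subseteq> Q2"
  by (auto simp: latM_def Q2_def Ints_subset_Rats[THEN subsetD])

lemma ip_add_left [simp]: "ip (x + y) v = ip x v + ip y v"
  and ip_diff_left [simp]: "ip (x - y) v = ip x v - ip y v"
  and ip_scaleR_left [simp]: "ip (c *\<^sub>R x) v = c * ip x v"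
  by (simp_all add: ip_def algebra_simps)

lemma continuous_on_ip_left [continuous_intros]: "continuous_on S (\<lambda>x. ip x v)"
  unfolding ip_def by (intro continuous_intros)

lemma ip_rhos_eq_imp_eq:
  assumes "0 < n" "ip u rho0 = ip v rho0" "ip u (rho1 q n) = ip v (rho1 q n)"
  shows "u = v"
  using assms by (simp add: ip_def rho0_def rho1_def prod_eq_iff)

definition integral_pairings :: "nat \<Rightarrow> nat \<Rightarrow> real \<times> real \<Rightarrow> bool" where
  "integral_pairings q n u \<longleftrightarrow> ip u rho0 \<in> \<int> \<and> ip u (rho1 q n) \<in> \<int>"

lemma integral_pairings_diff:
  "integral_pairings q n x \<Longrightarrow> integral_pairings q n y \<Longrightarrow> integral_pairings q n (x - y)"
  by (simp add: integral_pairings_def)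

lemma latM_integral_pairings: "u \<in> latM \<Longrightarrow> integral_pairings q n u"
  by (cases u) (auto simp: latM_def integral_pairings_def ip_def rho0_def rho1_def)

lemma Ints_less_iff_le_diff_one:
  "(x::real) \<in> \<int> \<Longrightarrow> y \<in> \<int> \<Longrightarrow> x < y \<longleftrightarrow> x \<le> y - 1"
  by (elim Ints_cases) (metis of_int_1 of_int_diff of_int_le_iff of_int_less_iff zle_diff1_eq)

lemma less_Ints_imp_le_floor_add_one:
  "(y::real) \<in> \<int> \<Longrightarrow> x < y \<Longrightarrow> of_int \<lfloor>x\<rfloor> + 1 \<le> y"
  by (elim Ints_cases) (metis floor_less_iff of_int_1 of_int_add of_int_le_iff zless_imp_add1_zle)

lemma mem_transl: "x \<in> transl v S \<longleftrightarrow> x - v \<in> S"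
  by (auto simp: transl_def image_iff intro: bexI[of _ "x - v"])

lemma mem_PD:
  "u \<in> PD q n a0 a1 \<longleftrightarrow> u \<in> Q2 \<and> - of_int a0 \<le> ip u rho0 \<and> - of_int a1 \<le> ip u (rho1 q n)"
  by (simp add: PD_def)

lemma sigmaDual_eq_PD: "sigmaDual q n = PD q n 0 0"
  by (simp add: sigmaDual_def PD_def)

lemma mem_transl_sigmaDual:
  "v \<in> Q2 \<Longrightarrow> u \<in> transl v (sigmaDual q n) \<longleftrightarrow>
     u \<in> Q2 \<and> ip v rho0 \<le> ip u rho0 \<and> ip v (rho1 q n) \<le> ip u (rho1 q n)"
  by (simp add: mem_transl sigmaDual_eq_PD mem_PD Q2_diff_iff)

lemma vert_pairings:
  assumes "0 < n"
  shows "vert q n b0 b1 \<in> Q2 \<and> ip (vert q n b0 b1) rho0 = - of_int b0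
    \<and> ip (vert q n b0 b1) (rho1 q n) = - of_int b1"
proof -
  define v :: "real \<times> real" where "v = (- of_int b0, (- of_int b1 - real q * of_int b0) / real n)"
  have v: "v \<in> Q2" "ip v rho0 = - of_int b0" "ip v (rho1 q n) = - of_int b1"
    using assms by (simp_all add: v_def Q2_iff ip_def rho0_def rho1_def)
  have "w \<in> Q2 \<and> PD q n b0 b1 = transl w (sigmaDual q n) \<longleftrightarrow> w = v" for w
  proof
    assume w: "w \<in> Q2 \<and> PD q n b0 b1 = transl w (sigmaDual q n)"
    then have "w \<in> PD q n b0 b1"
      by (simp add: mem_transl_sigmaDual)
    then have "- of_int b0 \<le> ip w rho0" "- of_int b1 \<le> ip w (rho1 q n)"
      by (simp_all add: mem_PD)
    moreover have "v \<in> transl w (sigmaDual q n)"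
      using w v by (metis mem_PD order_refl)
    then have "ip w rho0 \<le> ip v rho0" "ip w (rho1 q n) \<le> ip v (rho1 q n)"
      using w by (simp_all add: mem_transl_sigmaDual)
    ultimately have "ip w rho0 = ip v rho0" "ip w (rho1 q n) = ip v (rho1 q n)"
      using v by linarith+
    then show "w = v"
      by (rule ip_rhos_eq_imp_eq[OF assms])
  qed (auto simp: mem_transl_sigmaDual mem_PD v)
  then have "vert q n b0 b1 = v"
    unfolding vert_def by simp
  then show ?thesis
    using v by simp
qed

lemma vertK_pairings:
  assumes "0 < n"
  shows "vertK q n \<in> Q2" "ip (vertK q n) rho0 = 1" "ip (vertK q n) (rho1 q n) = 1"
  using vert_pairings[OF assms, of q "-1" "-1"] by (simp_all add: vertK_def)

lemma vert_integral_pairings: "0 < n \<Longrightarrow> integral_pairings q n (vert q n b0 b1)"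
  by (simp add: integral_pairings_def vert_pairings)

lemma vertK_integral_pairings: "0 < n \<Longrightarrow> integral_pairings q n (vertK q n)"
  by (simp add: integral_pairings_def vertK_pairings)

lemma clQ_iff: "x \<in> clQ S \<longleftrightarrow> x \<in> Q2 \<and> x \<in> closure (Q2 \<inter> S)"
  by (simp add: clQ_def closure_of_subtopology)

lemma rational_point_on_ray:
  assumes "u \<in> Q2" "e \<in> Q2" "0 < \<delta>" "0 < r"
  obtains t where "t \<in> \<rat>" "0 < t" "t < \<delta>" "u + t *\<^sub>R e \<in> Q2" "dist (u + t *\<^sub>R e) u < r"
proof -
  have "0 < min \<delta> (r / (norm e + 1))"
    using assms by (simp add: add_nonneg_pos)
  then obtain t where t: "t \<in> \<rat>" "0 < t" "t < min \<delta> (r / (norm e + 1))"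
    using Rats_dense_in_real by blast
  have "dist (u + t *\<^sub>R e) u \<le> t * (norm e + 1)"
    using t by (simp add: dist_norm)
  also have "\<dots> < r"
    using t by (simp add: pos_less_divide_eq add_nonneg_pos)
  finally show ?thesis
    using that t assms by (simp add: Q2_add Q2_scaleR)
qed

lemma intQ_subset_Q2: "intQ S \<subseteq> Q2"
  using interior_of_subset_topspace[of "top_of_set Q2" S] by (simp add: intQ_def)

lemma intQ_ray:
  assumes "u \<in> intQ S" "e \<in> Q2"
  obtains t where "0 < t" "u + t *\<^sub>R e \<in> S"
proof -
  obtain T where T: "open T" "u \<in> T" "Q2 \<inter> T \<subseteq> S"
    using assms(1) unfolding intQ_def interior_of_def openin_open by blast
  then obtain r where r: "0 < r" "ball u r \<subseteq> T"
    using open_contains_ball by blast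
  have "u \<in> Q2"
    using assms(1) intQ_subset_Q2 by blast
  then obtain t where t: "0 < t" "u + t *\<^sub>R e \<in> Q2" "dist (u + t *\<^sub>R e) u < r"
    using rational_point_on_ray[OF _ assms(2) zero_less_one r(1)] by blast
  then have "u + t *\<^sub>R e \<in> T"
    using r(2) by (auto simp: dist_commute)
  then show ?thesis
    using that t T(3) by blast
qed

lemma intQ_if_open: "open T \<Longrightarrow> Q2 \<inter> T \<subseteq> S \<Longrightarrow> u \<in> Q2 \<inter> T \<Longrightarrow> u \<in> intQ S"
  unfolding intQ_def interior_of_def openin_open by blast

lemma clQ_if_ray:
  assumes "u \<in> Q2" "e \<in> Q2" "0 < \<delta>"
    and "\<And>t. t \<in> \<rat> \<Longrightarrow> 0 < t \<Longrightarrow> t < \<delta> \<Longrightarrow> u + t *\<^sub>R e \<in> S"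
  shows "u \<in> clQ S"
proof -
  have "u \<in> closure (Q2 \<inter> S)"
    unfolding closure_approachable
  proof (intro allI impI)
    fix r :: real
    assume "0 < r"
    then obtain t where "t \<in> \<rat>" "0 < t" "t < \<delta>" "u + t *\<^sub>R e \<in> Q2" "dist (u + t *\<^sub>R e) u < r"
      using rational_point_on_ray[OF assms(1-3)] by blast
    then show "\<exists>y\<in>Q2 \<inter> S. dist y u < r"
      using assms(4) by blast
  qed
  then show ?thesis
    using assms(1) by (simp add: clQ_iff)
qed

lemma clQ_subset_closed:
  assumes "closed C" "S \<subseteq> C"
  shows "clQ S \<subseteq> C"
proof -
  have "closure (Q2 \<inter> S) \<subseteq> C"
    using assms by (intro closure_minimal) auto
  then show ?thesis
    by (auto simp: clQ_iff)
qed

lemma clQ_disjoint_open: "open T \<Longrightarrow> T \<inter> S = {} \<Longrightarrow> T \<inter> clQ S = {}"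
  using open_Int_closure_eq_empty[of T "Q2 \<inter> S"] by (auto simp: clQ_iff)

lemma mem_intQ_PD:
  assumes "0 < n"
  shows "u \<in> intQ (PD q n a0 a1) \<longleftrightarrow>
    u \<in> Q2 \<and> - of_int a0 < ip u rho0 \<and> - of_int a1 < ip u (rho1 q n)"
proof
  assume u: "u \<in> intQ (PD q n a0 a1)"
  have "- vertK q n \<in> Q2"
    using Q2_scaleR[of "-1" "vertK q n"] vertK_pairings[OF assms] by simp
  then obtain t where "0 < t" "u - t *\<^sub>R vertK q n \<in> PD q n a0 a1"
    using intQ_ray[OF u] by (metis scaleR_minus_right diff_conv_add_uminus)
  then show "u \<in> Q2 \<and> - of_int a0 < ip u rho0 \<and> - of_int a1 < ip u (rho1 q n)"
    using u intQ_subset_Q2 by (auto simp: mem_PD vertK_pairings[OF assms])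
next
  let ?T = "{u. - of_int a0 < ip u rho0 \<and> - of_int a1 < ip u (rho1 q n)}"
  assume "u \<in> Q2 \<and> - of_int a0 < ip u rho0 \<and> - of_int a1 < ip u (rho1 q n)"
  then have u: "u \<in> Q2 \<inter> ?T"
    by simp
  have "open ?T"
    by (intro open_Collect_conj open_Collect_less continuous_intros)
  moreover have "Q2 \<inter> ?T \<subseteq> PD q n a0 a1"
    by (auto simp: mem_PD)
  ultimately show "u \<in> intQ (PD q n a0 a1)"
    using u by (rule intQ_if_open)
qed

lemma GD_integral_pairings: "g \<in> GD q n a0 a1 \<Longrightarrow> integral_pairings q n g"
  by (simp add: GD_def latM_integral_pairings)

lemma GD_subset_Q2: "GD q n a0 a1 \<subseteq> Q2"
  using latM_subset_Q2 by (auto simp: GD_def)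

lemma mem_below:
  assumes "0 < n"
  shows "p \<in> below q n a0 a1 \<longleftrightarrow>
    p \<in> Q2 \<and> - of_int a0 < ip p rho0 \<and> - of_int a1 < ip p (rho1 q n)
    \<and> (\<forall>g\<in>GD q n a0 a1. ip p rho0 \<le> ip g rho0 \<or> ip p (rho1 q n) \<le> ip g (rho1 q n))"
  using assms GD_subset_Q2[THEN subsetD]
  by (auto simp: below_def mem_transl sigmaDual_eq_PD mem_intQ_PD Q2_diff_iff)

lemma mem_abelow:
  assumes "0 < n"
  shows "p \<in> abelow q n a0 a1 \<longleftrightarrow>
    p \<in> Q2 \<and> - of_int a0 \<le> ip p rho0 \<and> - of_int a1 \<le> ip p (rho1 q n)
    \<and> (\<forall>g\<in>GD q n a0 a1. ip p rho0 < ip g rho0 \<or> ip p (rho1 q n) < ip g (rho1 q n))"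
  using GD_subset_Q2[THEN subsetD] by (auto simp: abelow_def mem_transl_sigmaDual mem_PD)

lemma abelow_subset_clQ_below:
  assumes n: "0 < n" and p: "p \<in> abelow q n a0 a1"
  shows "p \<in> clQ (below q n a0 a1)"
proof -
  note e = vertK_pairings[OF n, of q]
  note pA = p[unfolded mem_abelow[OF n]]
  define \<delta> where "\<delta> = min (of_int \<lfloor>ip p rho0\<rfloor> + 1 - ip p rho0)
    (of_int \<lfloor>ip p (rho1 q n)\<rfloor> + 1 - ip p (rho1 q n))"
  \<comment> \<open>\<open>\<delta>\<close> is the gap to the next integers, so a pairing of \<open>p\<close> below an integer stays below it
     when raised by less than \<open>\<delta>\<close>\<close>
  have "0 < \<delta>"
    unfolding \<delta>_def by linarith
  moreover have "p + t *\<^sub>R vertK q n \<in> below q n a0 a1" if t: "t \<in> \<rat>" "0 < t" "t < \<delta>" for t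
  proof -
    have "ip p rho0 + t \<le> ip g rho0 \<or> ip p (rho1 q n) + t \<le> ip g (rho1 q n)"
      if "g \<in> GD q n a0 a1" for g
      using pA that t GD_integral_pairings[OF that] less_Ints_imp_le_floor_add_one
      unfolding integral_pairings_def \<delta>_def by fastforce
    moreover have "p + t *\<^sub>R vertK q n \<in> Q2"
      using pA e t by (simp add: Q2_add Q2_scaleR)
    ultimately show ?thesis
      using pA e t by (auto simp: mem_below[OF n])
  qed
  ultimately show ?thesis
    using pA e by (intro clQ_if_ray[of p "vertK q n" \<delta>]) auto
qed

lemma below_subset_clQ_abelow:
  assumes n: "0 < n" and p: "p \<in> below q n a0 a1"
  shows "p \<in> clQ (abelow q n a0 a1)"
proof -
  note e = vertK_pairings[OF n, of q]
  note pB = p[unfolded mem_below[OF n]]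
  define \<delta> where "\<delta> = min (ip p rho0 + of_int a0) (ip p (rho1 q n) + of_int a1)"
  have "0 < \<delta>"
    unfolding \<delta>_def using pB by linarith
  moreover have "p + t *\<^sub>R (- vertK q n) \<in> abelow q n a0 a1" if t: "t \<in> \<rat>" "0 < t" "t < \<delta>" for t
  proof -
    have "p - t *\<^sub>R vertK q n \<in> Q2"
      using pB e t by (simp add: Q2_diff Q2_scaleR)
    then show ?thesis
      using pB e t unfolding \<delta>_def by (fastforce simp: mem_abelow[OF n])
  qed
  ultimately show ?thesis
    using pB e Q2_scaleR[of "-1"] by (intro clQ_if_ray[of p "- vertK q n" \<delta>]) auto
qed

lemma clQ_below_subset_PD:
  assumes "0 < n"
  shows "clQ (below q n a0 a1) \<subseteq> PD q n a0 a1"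
proof -
  let ?C = "{u. - of_int a0 \<le> ip u rho0 \<and> - of_int a1 \<le> ip u (rho1 q n)}"
  have "closed ?C"
    by (intro closed_Collect_conj closed_Collect_le continuous_intros)
  then have "clQ (below q n a0 a1) \<subseteq> ?C"
    by (rule clQ_subset_closed) (auto simp: mem_below[OF assms])
  then show ?thesis
    by (auto simp: mem_PD clQ_iff)
qed

lemma clQ_abelow_not_above_GD:
  assumes n: "0 < n" and p: "p \<in> clQ (abelow q n a0 a1)" and g: "g \<in> GD q n a0 a1"
  shows "ip p rho0 \<le> ip g rho0 \<or> ip p (rho1 q n) \<le> ip g (rho1 q n)"
proof -
  let ?T = "{u. ip g rho0 < ip u rho0 \<and> ip g (rho1 q n) < ip u (rho1 q n)}"
  have "open ?T"
    by (intro open_Collect_conj open_Collect_less continuous_intros)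
  moreover have "?T \<inter> abelow q n a0 a1 = {}"
    using g by (force simp: mem_abelow[OF n])
  ultimately have "?T \<inter> clQ (abelow q n a0 a1) = {}"
    by (rule clQ_disjoint_open)
  then show ?thesis
    using p by (auto simp: not_le)
qed

lemma shift_in_abelow_iff_clQ_below:
  assumes n: "0 < n" and x: "x \<in> below q n a0 a1"
  shows "x - vertK q n \<in> abelow q n a0 a1 \<longleftrightarrow> x - vertK q n \<in> clQ (below q n a0 a1)"
proof
  assume "x - vertK q n \<in> clQ (below q n a0 a1)"
  then have "x - vertK q n \<in> PD q n a0 a1"
    using clQ_below_subset_PD[OF n] by blast
  then show "x - vertK q n \<in> abelow q n a0 a1"
    using x vertK_pairings[OF n]
    by (auto simp: mem_PD mem_below[OF n] mem_abelow[OF n] dest!: bspec)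
qed (rule abelow_subset_clQ_below[OF n])

lemma in_below_iff_clQ_abelow:
  assumes n: "0 < n" and x: "x - vertK q n \<in> abelow q n a0 a1"
  shows "x \<in> below q n a0 a1 \<longleftrightarrow> x \<in> clQ (abelow q n a0 a1)"
proof
  assume x': "x \<in> clQ (abelow q n a0 a1)"
  then have "x \<in> Q2"
    by (simp add: clQ_iff)
  then show "x \<in> below q n a0 a1"
    using x vertK_pairings[OF n] clQ_abelow_not_above_GD[OF n x']
    by (auto simp: mem_below[OF n] mem_abelow[OF n])
qed (rule below_subset_clQ_abelow[OF n])

lemma below_iff_shift_in_abelow:
  assumes n: "0 < n" and z: "integral_pairings q n z"
  shows "z \<in> below q n a0 a1 \<longleftrightarrow> z - vertK q n \<in> abelow q n a0 a1"
proof -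
  note e = vertK_pairings[OF n, of q]
  have bound: "- of_int a < ip z v \<longleftrightarrow> - of_int a \<le> ip (z - vertK q n) v"
    if "ip z v \<in> \<int>" "ip (vertK q n) v = 1" for a :: int and v
    using that Ints_less_iff_le_diff_one[of "- of_int a" "ip z v"] by simp
  have step: "ip z v \<le> ip g v \<longleftrightarrow> ip (z - vertK q n) v < ip g v"
    if "ip z v \<in> \<int>" "ip g v \<in> \<int>" "ip (vertK q n) v = 1" for g v
    using that Ints_less_iff_le_diff_one[of "ip g v" "ip z v"] by auto
  have "ip g rho0 \<in> \<int>" "ip g (rho1 q n) \<in> \<int>" if "g \<in> GD q n a0 a1" for g
    using GD_integral_pairings[OF that] by (simp_all add: integral_pairings_def)
  then show ?thesis
    using z e bound step unfolding integral_pairings_def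
    by (simp add: mem_below[OF n] mem_abelow[OF n] Q2_diff_iff cong: ball_cong)
qed

lemma link_eq_clQ_abelow_inter_transl_abelow:
  assumes n: "0 < n"
  shows "link q n a0 a1 = clQ (abelow q n a0 a1) \<inter> transl (vertK q n) (abelow q n a0 a1)"
proof (rule set_eqI)
  fix x
  have "x \<in> link q n a0 a1 \<longleftrightarrow> x \<in> below q n a0 a1 \<and> x - vertK q n \<in> clQ (below q n a0 a1)"
    by (simp add: link_def mem_transl)
  also have "\<dots> \<longleftrightarrow> x \<in> clQ (abelow q n a0 a1) \<and> x - vertK q n \<in> abelow q n a0 a1"
    using shift_in_abelow_iff_clQ_below[OF n, of x] in_below_iff_clQ_abelow[OF n, of x] by blast
  finally show "x \<in> link q n a0 a1 \<longleftrightarrow> x \<in> clQ (abelow q n a0 a1) \<inter> transl (vertK q n) (abelow q n a0 a1)"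
    by (simp add: mem_transl)
qed

lemma transl_below_lattice_eq_transl_link:
  assumes n: "0 < n" and w: "integral_pairings q n w"
  shows "transl w (below q n a0 a1) \<inter> latM = transl w (link q n a0 a1) \<inter> latM"
proof -
  have "x - w \<in> link q n a0 a1" if "x \<in> latM" "x - w \<in> below q n a0 a1" for x
    using that below_iff_shift_in_abelow[OF n] abelow_subset_clQ_below[OF n]
      integral_pairings_diff[OF latM_integral_pairings w]
    by (simp add: link_def mem_transl)
  then show ?thesis
    by (auto simp: link_def mem_transl)
qed

lemma transl_abelow_lattice_eq_transl_link:
  assumes n: "0 < n" and w: "integral_pairings q n w"
  shows "transl w (abelow q n a0 a1) \<inter> latM = transl (w - vertK q n) (link q n a0 a1) \<inter> latM"
proof -
  have "x - w \<in> abelow q n a0 a1 \<longleftrightarrow> x - (w - vertK q n) \<in> link q n a0 a1" if "x \<in> latM" for x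
  proof -
    have shift: "x - (w - vertK q n) - vertK q n = x - w"
      by simp
    have "integral_pairings q n (x - (w - vertK q n))"
      using latM_integral_pairings[OF that] w vertK_integral_pairings[OF n]
      by (intro integral_pairings_diff)
    then have "x - (w - vertK q n) \<in> below q n a0 a1 \<longleftrightarrow> x - w \<in> abelow q n a0 a1"
      using below_iff_shift_in_abelow[OF n] shift by metis
    then show ?thesis
      using abelow_subset_clQ_below[OF n, of "x - w"] shift by (auto simp: link_def mem_transl)
  qed
  then show ?thesis
    by (auto simp: mem_transl)
qed

theorem mainTheorem8:
  fixes q n :: nat and a0 a1 b0 b1 :: int
  assumes "0 < q" and "q < n" and "coprime q n"
  shows "link q n a0 a1 = clQ (abelow q n a0 a1) \<inter> transl (vertK q n) (abelow q n a0 a1)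
    \<and> transl (vert q n b0 b1) (below q n a0 a1) \<inter> latM
        = transl (vert q n b0 b1) (link q n a0 a1) \<inter> latM
    \<and> transl (vert q n b0 b1) (abelow q n a0 a1) \<inter> latM
        = transl (vert q n b0 b1 - vertK q n) (link q n a0 a1) \<inter> latM"
proof -
  have n: "0 < n"
    using assms by simp
  note w = vert_integral_pairings[OF n, of q b0 b1]
  show ?thesis
    using link_eq_clQ_abelow_inter_transl_abelow[OF n]
      transl_below_lattice_eq_transl_link[OF n w] transl_abelow_lattice_eq_transl_link[OF n w]
    by blast
qed

end
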